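(* Let $G=(V,E)$ be a network as in the context, let $\xi\subseteq E$ be an edge subset, $t$ a sink node, and $r$ an integer with $\mathrm{mincut}(\xi,t)\le r\le C_t$. Then there exists an edge subset $\eta\subseteq E$ with $|\eta|=r$ that is primary for $t$ and such that $\eta$ is a cut separating $t$ from $\xi$.
   Context: Network: $G=(V,E)$ is a finite directed acyclic graph (parallel edges allowed) with a single source node $s$ and a set of sink nodes $T\subseteq V\setminus\{s\}$; $s$ has no incoming edges and sinks have no outgoing edges. A directed path is a sequence of edges $(e_1,\dots,e_m)$, $m\ge1$, with tail of $e_{k+1}$ equal to head of $e_k$. A cut separating node $v$ from node $u$ is a set of edges whose removal leaves no directed path from $u$ to $v$; $C_t$ is the minimum size of a cut separating sink $t$ from $s$. For $\xi\subseteq E$ and a node $u$, $A\subseteq E$ is a cut separating $u$ from $\xi$ if every directed path in $G$ whose first edge lies in $\xi$ and whose last edge has head $u$ contains an edge of $A$ (equivalently, $A$ separates $\xi$ from $u$ in the reversed network). $\mathrm{mincut}(\xi,u)$ is the minimum size of such a cut; a cut of that size is a minimum cut separating $u$ from $\xi$. A minimum cut separating $u$ from $\xi$ is primary if it separates $u$ from every minimum cut separating $u$ from $\xi$; it exists and is unique. An edge subset $\eta$ is primary for $u$ if $\eta$ is the primary minimum cut separating $u$ from $\eta$. *)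

theory Defs
  imports Main
begin

text \<open>A network: node set V, edge set E (edge identifiers, so parallel edges are allowed),
  tail and head maps tail, head, source s, set of sinks T.\<close>

definition is_path :: "'e set \<Rightarrow> ('e \<Rightarrow> 'v) \<Rightarrow> ('e \<Rightarrow> 'v) \<Rightarrow> 'e list \<Rightarrow> bool" where
  "is_path E tail head p \<longleftrightarrow> p \<noteq> [] \<and> set p \<subseteq> E \<and>
     (\<forall>k. Suc k < length p \<longrightarrow> tail (p ! Suc k) = head (p ! k))"

definition network ::
  "'v set \<Rightarrow> 'e set \<Rightarrow> ('e \<Rightarrow> 'v) \<Rightarrow> ('e \<Rightarrow> 'v) \<Rightarrow> 'v \<Rightarrow> 'v set \<Rightarrow> bool" where
  "network V E tail head s T \<longleftrightarrow>
     finite V \<and> finite E \<and> (\<forall>e\<in>E. tail e \<in> V \<and> head e \<in> V) \<and>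
     \<comment> \<open>acyclic: no directed cycle\<close>
     (\<forall>p. is_path E tail head p \<longrightarrow> tail (p ! 0) \<noteq> head (last p)) \<and>
     s \<in> V \<and> T \<subseteq> V - {s} \<and>
     (\<forall>e\<in>E. head e \<noteq> s) \<and> (\<forall>e\<in>E. tail e \<notin> T)"

definition node_cut :: "'e set \<Rightarrow> ('e \<Rightarrow> 'v) \<Rightarrow> ('e \<Rightarrow> 'v) \<Rightarrow> 'v \<Rightarrow> 'v \<Rightarrow> 'e set \<Rightarrow> bool" where
  "node_cut E tail head u v A \<longleftrightarrow> A \<subseteq> E \<and>
     (\<forall>p. is_path E tail head p \<and> tail (p ! 0) = u \<and> head (last p) = v \<longrightarrow> set p \<inter> A \<noteq> {})"

definition C_min :: "'e set \<Rightarrow> ('e \<Rightarrow> 'v) \<Rightarrow> ('e \<Rightarrow> 'v) \<Rightarrow> 'v \<Rightarrow> 'v \<Rightarrow> nat" where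
  "C_min E tail head s t = (LEAST k. \<exists>A. node_cut E tail head s t A \<and> card A = k)"

definition edge_cut :: "'e set \<Rightarrow> ('e \<Rightarrow> 'v) \<Rightarrow> ('e \<Rightarrow> 'v) \<Rightarrow> 'e set \<Rightarrow> 'v \<Rightarrow> 'e set \<Rightarrow> bool" where
  "edge_cut E tail head xi u A \<longleftrightarrow> A \<subseteq> E \<and>
     (\<forall>p. is_path E tail head p \<and> p ! 0 \<in> xi \<and> head (last p) = u \<longrightarrow> set p \<inter> A \<noteq> {})"

definition mincut :: "'e set \<Rightarrow> ('e \<Rightarrow> 'v) \<Rightarrow> ('e \<Rightarrow> 'v) \<Rightarrow> 'e set \<Rightarrow> 'v \<Rightarrow> nat" where
  "mincut E tail head xi u = (LEAST k. \<exists>A. edge_cut E tail head xi u A \<and> card A = k)"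

definition min_edge_cut :: "'e set \<Rightarrow> ('e \<Rightarrow> 'v) \<Rightarrow> ('e \<Rightarrow> 'v) \<Rightarrow> 'e set \<Rightarrow> 'v \<Rightarrow> 'e set \<Rightarrow> bool" where
  "min_edge_cut E tail head xi u A \<longleftrightarrow>
     edge_cut E tail head xi u A \<and> card A = mincut E tail head xi u"

definition primary_cut :: "'e set \<Rightarrow> ('e \<Rightarrow> 'v) \<Rightarrow> ('e \<Rightarrow> 'v) \<Rightarrow> 'e set \<Rightarrow> 'v \<Rightarrow> 'e set \<Rightarrow> bool" where
  "primary_cut E tail head xi u A \<longleftrightarrow> min_edge_cut E tail head xi u A \<and>
     (\<forall>B. min_edge_cut E tail head xi u B \<longrightarrow> edge_cut E tail head B u A)"

definition primary_for :: "'e set \<Rightarrow> ('e \<Rightarrow> 'v) \<Rightarrow> ('e \<Rightarrow> 'v) \<Rightarrow> 'e set \<Rightarrow> 'v \<Rightarrow> bool" where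
  "primary_for E tail head eta u \<longleftrightarrow> primary_cut E tail head eta u eta"

end

theory Submission
  imports Defs
begin

(* Adding a single edge to xi raises mincut(xi, t) by at most one, and mincut(E, t) >= C_t
   because a cut separating t from all edges separates t from s; hence some C with
   xi \<subseteq> C \<subseteq> E has mincut(C, t) = r. Among the minimum cuts separating t from C take one,
   eta, whose set of upstream edges (edges starting a path to t that avoids the cut) is
   smallest. A minimum cut separating t from eta is one separating t from C and has no more
   upstream edges than eta; if it were not separated from t by eta, its own edges would make
   it have strictly fewer. So eta is primary for t. *)

definition upstream_edges :: "'e set \<Rightarrow> ('e \<Rightarrow> 'v) \<Rightarrow> ('e \<Rightarrow> 'v) \<Rightarrow> 'v \<Rightarrow> 'e set \<Rightarrow> 'e set" where
  "upstream_edges E tail head u C =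
     {e. \<exists>p. is_path E tail head p \<and> p ! 0 = e \<and> head (last p) = u \<and> set p \<inter> C = {}}"

lemma is_path_drop:
  assumes "is_path E tail head p" "k < length p"
  shows "is_path E tail head (drop k p)"
proof -
  have "tail (drop k p ! Suc j) = head (drop k p ! j)" if "Suc j < length (drop k p)" for j
  proof -
    have "Suc (k + j) < length p"
      using that by simp
    then show ?thesis
      using assms unfolding is_path_def by simp
  qed
  then show ?thesis
    using assms set_drop_subset[of k p] unfolding is_path_def by auto
qed

lemma is_path_nth_0_mem: "is_path E tail head p \<Longrightarrow> p ! 0 \<in> set p"
  unfolding is_path_def by simp

lemma upstream_edges_subset: "upstream_edges E tail head u C \<subseteq> E"
  unfolding upstream_edges_def is_path_def by (auto intro: nth_mem)

lemma edge_cut_all: "edge_cut E tail head A u E"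
  unfolding edge_cut_def is_path_def by (simp add: Int_absorb2)

lemma edge_cut_self: "B \<subseteq> E \<Longrightarrow> edge_cut E tail head B u B"
  unfolding edge_cut_def using is_path_nth_0_mem by fastforce

lemma edge_cut_antimono: "A' \<subseteq> A \<Longrightarrow> edge_cut E tail head A u B \<Longrightarrow> edge_cut E tail head A' u B"
  unfolding edge_cut_def by blast

lemma edge_cut_insert:
  "edge_cut E tail head A u B \<Longrightarrow> e \<in> E \<Longrightarrow> edge_cut E tail head (insert e A) u (insert e B)"
  unfolding edge_cut_def using is_path_nth_0_mem by fastforce

lemma edge_cut_meets_path_through:
  assumes "edge_cut E tail head B u C" "is_path E tail head p" "head (last p) = u"
    and "set p \<inter> B \<noteq> {}"
  shows "set p \<inter> C \<noteq> {}"
proof -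
  obtain k where k: "k < length p" "p ! k \<in> B"
    using assms(4) by (metis disjoint_iff in_set_conv_nth)
  have "is_path E tail head (drop k p)"
    using is_path_drop[OF assms(2) k(1)] .
  moreover have "drop k p ! 0 \<in> B" "head (last (drop k p)) = u"
    using k assms(3) by simp_all
  ultimately have "set (drop k p) \<inter> C \<noteq> {}"
    using assms(1) unfolding edge_cut_def by blast
  then show ?thesis
    using set_drop_subset[of k p] by blast
qed

lemma edge_cut_trans:
  assumes "edge_cut E tail head A u B" "edge_cut E tail head B u C"
  shows "edge_cut E tail head A u C"
  using assms edge_cut_meets_path_through[OF assms(2)] unfolding edge_cut_def by blast

lemma node_cut_if_edge_cut_all:
  assumes "edge_cut E tail head E u B"
  shows "node_cut E tail head s u B"
  using assms is_path_nth_0_mem unfolding edge_cut_def node_cut_def is_path_def by blast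

lemma mincut_le_card: "edge_cut E tail head A u B \<Longrightarrow> mincut E tail head A u \<le> card B"
  unfolding mincut_def by (rule Least_le) blast

lemma min_edge_cut_exists: "\<exists>B. min_edge_cut E tail head A u B"
  unfolding min_edge_cut_def mincut_def
  by (rule LeastI_ex[where P = "\<lambda>k. \<exists>B. edge_cut E tail head A u B \<and> card B = k"])
    (use edge_cut_all[of E tail head A u] in blast)

lemma C_min_le_mincut_all: "C_min E tail head s u \<le> mincut E tail head E u"
proof -
  obtain B where B: "edge_cut E tail head E u B" "card B = mincut E tail head E u"
    using min_edge_cut_exists unfolding min_edge_cut_def by metis
  have "node_cut E tail head s u B"
    using node_cut_if_edge_cut_all[OF B(1)] .
  then show ?thesis
    unfolding C_min_def using B(2) by (metis (mono_tags, lifting) Least_le)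
qed

lemma mincut_insert_le:
  assumes "e \<in> E"
  shows "mincut E tail head (insert e A) u \<le> mincut E tail head A u + 1"
proof -
  obtain B where B: "edge_cut E tail head A u B" "card B = mincut E tail head A u"
    using min_edge_cut_exists unfolding min_edge_cut_def by metis
  have "mincut E tail head (insert e A) u \<le> card (insert e B)"
    using mincut_le_card edge_cut_insert[OF B(1) assms] .
  also have "\<dots> \<le> card B + 1"
    by (cases "finite B") (auto simp: card_insert_if)
  finally show ?thesis
    using B(2) by simp
qed

lemma mincut_intermediate_value:
  assumes "finite F" "F \<subseteq> E" "mincut E tail head A u \<le> r" "r \<le> mincut E tail head (A \<union> F) u"
  shows "\<exists>C. A \<subseteq> C \<and> C \<subseteq> A \<union> F \<and> mincut E tail head C u = r"
  using assms
proof (induction F rule: finite_induct)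
  case empty
  then show ?case by auto
next
  case (insert e F)
  show ?case
  proof (cases "r \<le> mincut E tail head (A \<union> F) u")
    case True
    then show ?thesis
      using insert.IH insert.prems by blast
  next
    case False
    then have "mincut E tail head (A \<union> insert e F) u = r"
      using mincut_insert_le[of e E tail head "A \<union> F" u] insert.prems by simp
    then show ?thesis by blast
  qed
qed

lemma min_edge_cut_self:
  assumes "min_edge_cut E tail head A u B"
  shows "min_edge_cut E tail head B u B"
proof -
  have B: "edge_cut E tail head A u B" "card B = mincut E tail head A u"
    using assms unfolding min_edge_cut_def by simp_all
  obtain D where D: "edge_cut E tail head B u D" "card D = mincut E tail head B u"
    using min_edge_cut_exists unfolding min_edge_cut_def by metis
  have "card B \<le> card D"
    using B mincut_le_card[OF edge_cut_trans[OF B(1) D(1)]] by simp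
  moreover have "edge_cut E tail head B u B"
    using B(1) edge_cut_self unfolding edge_cut_def by metis
  ultimately show ?thesis
    unfolding min_edge_cut_def using D(2) mincut_le_card le_antisym by metis
qed

lemma min_edge_cut_trans:
  assumes "min_edge_cut E tail head A u B" "min_edge_cut E tail head B u C"
  shows "min_edge_cut E tail head A u C"
  using assms edge_cut_trans min_edge_cut_self[OF assms(1)] unfolding min_edge_cut_def by metis

lemma upstream_edges_antimono:
  assumes "edge_cut E tail head B u C"
  shows "upstream_edges E tail head u C \<subseteq> upstream_edges E tail head u B"
  using edge_cut_meets_path_through[OF assms] unfolding upstream_edges_def by blast

lemma upstream_edges_psubset:
  assumes "edge_cut E tail head B u C" "\<not> edge_cut E tail head C u B" "B \<subseteq> E"
  shows "upstream_edges E tail head u C \<subset> upstream_edges E tail head u B"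
proof -
  obtain p where p: "is_path E tail head p" "p ! 0 \<in> C" "head (last p) = u" "set p \<inter> B = {}"
    using assms(2,3) unfolding edge_cut_def by auto
  have "p ! 0 \<in> upstream_edges E tail head u B"
    using p unfolding upstream_edges_def by auto
  moreover have "p ! 0 \<notin> upstream_edges E tail head u C"
  proof
    assume "p ! 0 \<in> upstream_edges E tail head u C"
    then obtain q where "is_path E tail head q" "q ! 0 = p ! 0" "set q \<inter> C = {}"
      unfolding upstream_edges_def by auto
    then show False
      using p(2) is_path_nth_0_mem by fastforce
  qed
  ultimately show ?thesis
    using upstream_edges_antimono[OF assms(1)] by auto
qed

lemma primary_for_if_upstream_edges_minimal:
  assumes "finite E" "min_edge_cut E tail head A u B"
    and minimal: "\<And>C. min_edge_cut E tail head A u C \<Longrightarrow>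
      card (upstream_edges E tail head u B) \<le> card (upstream_edges E tail head u C)"
  shows "primary_for E tail head B u"
  unfolding primary_for_def primary_cut_def
proof (intro conjI allI impI)
  show "min_edge_cut E tail head B u B"
    using min_edge_cut_self[OF assms(2)] .
  fix C
  assume C: "min_edge_cut E tail head B u C"
  show "edge_cut E tail head C u B"
  proof (rule ccontr)
    assume "\<not> edge_cut E tail head C u B"
    moreover have "edge_cut E tail head B u C" "B \<subseteq> E"
      using C assms(2) unfolding min_edge_cut_def edge_cut_def by simp_all
    ultimately have "upstream_edges E tail head u C \<subset> upstream_edges E tail head u B"
      using upstream_edges_psubset by metis
    then have "card (upstream_edges E tail head u C) < card (upstream_edges E tail head u B)"
      using psubset_card_mono finite_subset[OF upstream_edges_subset assms(1)] by metis
    then show False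
      using minimal[OF min_edge_cut_trans[OF assms(2) C]] by simp
  qed
qed

lemma primary_min_edge_cut_exists:
  assumes "finite E"
  shows "\<exists>B. min_edge_cut E tail head A u B \<and> primary_for E tail head B u"
proof -
  obtain B0 where "min_edge_cut E tail head A u B0"
    using min_edge_cut_exists by metis
  from ex_has_least_nat[of "min_edge_cut E tail head A u", OF this,
      where m = "\<lambda>B. card (upstream_edges E tail head u B)"]
  obtain B where B: "min_edge_cut E tail head A u B"
    and minimal: "\<forall>C. min_edge_cut E tail head A u C \<longrightarrow>
      card (upstream_edges E tail head u B) \<le> card (upstream_edges E tail head u C)"
    by blast
  then show ?thesis
    using primary_for_if_upstream_edges_minimal[OF assms B] by blast
qed

theorem lemma9:
  fixes V :: "'v set" and E :: "'e set" and tail head :: "'e \<Rightarrow> 'v"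
    and s t :: 'v and T :: "'v set" and xi :: "'e set" and r :: nat
  assumes "network V E tail head s T"
    and "xi \<subseteq> E"
    and "t \<in> T"
    and "mincut E tail head xi t \<le> r"
    and "r \<le> C_min E tail head s t"
  shows "\<exists>eta. eta \<subseteq> E \<and> card eta = r \<and> primary_for E tail head eta t
           \<and> edge_cut E tail head xi t eta"
proof -
  have fin: "finite E"
    using assms(1) by (simp add: network_def)
  have "r \<le> mincut E tail head (xi \<union> E) t"
    using assms(2,5) C_min_le_mincut_all[of E tail head s t] by (simp add: Un_absorb1)
  then obtain C where C: "xi \<subseteq> C" "mincut E tail head C t = r"
    using mincut_intermediate_value[OF fin subset_refl assms(4)] by blast
  obtain eta where eta: "min_edge_cut E tail head C t eta" "primary_for E tail head eta t"
    using primary_min_edge_cut_exists[OF fin] by metis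
  then have cut: "edge_cut E tail head C t eta" and "card eta = r"
    using C(2) unfolding min_edge_cut_def by simp_all
  moreover have "edge_cut E tail head xi t eta"
    using edge_cut_antimono[OF C(1) cut] .
  moreover have "eta \<subseteq> E"
    using cut unfolding edge_cut_def by simp
  ultimately show ?thesis
    using eta(2) by blast
qed

end
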